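(* Let $\mathfrak F$ and $\mathfrak G$ be semiclosed generalized flags in $V$ and $V_*$, respectively. The following are equivalent: (1) $\mathfrak F,\mathfrak G$ form a taut couple; (2) for every $F\in\mathfrak F$ such that $F^\perp$ is a nonzero proper subspace of $V_*$, $F^\perp$ is both a union and an intersection of members of $\mathfrak G$; and for every $G\in\mathfrak G$ such that $G^\perp$ is a nonzero proper subspace of $V$, $G^\perp$ is both a union and an intersection of members of $\mathfrak F$.
   Context: $V,V_*$: countable-dimensional complex spaces with a nondegenerate pairing $\langle\cdot,\cdot\rangle$; $\mathfrak{gl}(V,V_* )=V\otimes V_*$ acts on $V$ by $(v\otimes w)u=\langle u,w\rangle v$ and on $V_*$ by $(v\otimes w)y=-\langle v,y\rangle w$. $F^\perp$ is the orthogonal complement under the pairing; $F$ is closed if $F=F^{\perp\perp}$, $\overline F:=F^{\perp\perp}$. A generalized flag in $V$ (similarly in $V_*$) is a chain $\mathfrak F$ of subspaces such that every member belongs to an immediate predecessor–successor pair $F'\subsetneq F''$ of $\mathfrak F$ (no member strictly between), and every nonzero vector $v$ lies in $F''\setminus F'$ for some pair. It is semiclosed if for each pair $F'\subset F''$ one has $\overline{F'}\in\{F',F''\}$. $\mathrm{St}_{\mathfrak F}$ is the stabilizer of $\mathfrak F$ in $\mathfrak{gl}(V,V_* )$. Semiclosed generalized flags $\mathfrak F$ in $V$ and $\mathfrak G$ in $V_*$ form a taut couple if the chain $\mathfrak F^\perp=\{F^\perp:F\in\mathfrak F\}$ is stable under $\mathrm{St}_{\mathfrak G}$ and the chain $\mathfrak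 G^\perp$ is stable under $\mathrm{St}_{\mathfrak F}$. *)

theory Defs
  imports Complex_Main "HOL-Library.Countable_Set"
begin

text \<open>Spaces V and V_* are the types 'v and 'w with complex scalar multiplications
  sV, sW.  The pairing is p :: 'v => 'w => complex.\<close>

definition orthW :: "('v \<Rightarrow> 'w \<Rightarrow> complex) \<Rightarrow> 'v set \<Rightarrow> 'w set" where
  "orthW p F = {y. \<forall>v\<in>F. p v y = 0}"

definition orthV :: "('v \<Rightarrow> 'w \<Rightarrow> complex) \<Rightarrow> 'w set \<Rightarrow> 'v set" where
  "orthV p G = {v. \<forall>y\<in>G. p v y = 0}"

definition nondeg_pairing ::
  "(complex \<Rightarrow> 'v::ab_group_add \<Rightarrow> 'v) \<Rightarrow> (complex \<Rightarrow> 'w::ab_group_add \<Rightarrow> 'w)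
   \<Rightarrow> ('v \<Rightarrow> 'w \<Rightarrow> complex) \<Rightarrow> bool" where
  "nondeg_pairing sV sW p \<longleftrightarrow>
     vector_space sV \<and> vector_space sW \<and>
     (\<forall>y. Vector_Spaces.linear sV ((*)) (\<lambda>u. p u y)) \<and>
     (\<forall>u. Vector_Spaces.linear sW ((*)) (p u)) \<and>
     (\<forall>u. (\<forall>y. p u y = 0) \<longrightarrow> u = 0) \<and>
     (\<forall>y. (\<forall>u. p u y = 0) \<longrightarrow> y = 0)"

definition countable_dim :: "(complex \<Rightarrow> 'v::ab_group_add \<Rightarrow> 'v) \<Rightarrow> bool" where
  "countable_dim s \<longleftrightarrow> (\<exists>B. countable B \<and> \<not> module.dependent s B \<and> module.span s B = UNIV)"

definition imm_pair :: "'a set set \<Rightarrow> 'a set \<Rightarrow> 'a set \<Rightarrow> bool" where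
  "imm_pair \<FF> F1 F2 \<longleftrightarrow> F1 \<in> \<FF> \<and> F2 \<in> \<FF> \<and> F1 \<subset> F2 \<and>
     \<not> (\<exists>H\<in>\<FF>. F1 \<subset> H \<and> H \<subset> F2)"

definition gen_flag :: "(complex \<Rightarrow> 'a::ab_group_add \<Rightarrow> 'a) \<Rightarrow> 'a set set \<Rightarrow> bool" where
  "gen_flag s \<FF> \<longleftrightarrow>
     (\<forall>F\<in>\<FF>. module.subspace s F) \<and>
     (\<forall>F\<in>\<FF>. \<forall>H\<in>\<FF>. F \<subseteq> H \<or> H \<subseteq> F) \<and>
     (\<forall>F\<in>\<FF>. \<exists>F1 F2. imm_pair \<FF> F1 F2 \<and> (F = F1 \<or> F = F2)) \<and>
     (\<forall>v. v \<noteq> 0 \<longrightarrow> (\<exists>F1 F2. imm_pair \<FF> F1 F2 \<and> v \<in> F2 \<and> v \<notin> F1))"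

definition semiclosed_V ::
  "(complex \<Rightarrow> 'v::ab_group_add \<Rightarrow> 'v) \<Rightarrow> ('v \<Rightarrow> 'w \<Rightarrow> complex) \<Rightarrow> 'v set set \<Rightarrow> bool" where
  "semiclosed_V sV p \<FF> \<longleftrightarrow> gen_flag sV \<FF> \<and>
     (\<forall>F1 F2. imm_pair \<FF> F1 F2 \<longrightarrow> orthV p (orthW p F1) \<in> {F1, F2})"

definition semiclosed_W ::
  "(complex \<Rightarrow> 'w::ab_group_add \<Rightarrow> 'w) \<Rightarrow> ('v \<Rightarrow> 'w \<Rightarrow> complex) \<Rightarrow> 'w set set \<Rightarrow> bool" where
  "semiclosed_W sW p \<GG> \<longleftrightarrow> gen_flag sW \<GG> \<and>
     (\<forall>G1 G2. imm_pair \<GG> G1 G2 \<longrightarrow> orthW p (orthV p G1) \<in> {G1, G2})"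

text \<open>Elements of gl(V,V_*) = V \<otimes> V_* are represented as finite sums of
  rank-one tensors v \<otimes> w, given by lists of pairs (v, w).\<close>

definition actV :: "(complex \<Rightarrow> 'v::ab_group_add \<Rightarrow> 'v) \<Rightarrow> ('v \<Rightarrow> 'w \<Rightarrow> complex)
    \<Rightarrow> ('v \<times> 'w) list \<Rightarrow> 'v \<Rightarrow> 'v" where
  "actV sV p X u = (\<Sum>(v, w)\<leftarrow>X. sV (p u w) v)"

definition actW :: "(complex \<Rightarrow> 'w::ab_group_add \<Rightarrow> 'w) \<Rightarrow> ('v \<Rightarrow> 'w \<Rightarrow> complex)
    \<Rightarrow> ('v \<times> 'w) list \<Rightarrow> 'w \<Rightarrow> 'w" where
  "actW sW p X y = (\<Sum>(v, w)\<leftarrow>X. - sW (p v y) w)"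

definition StV :: "(complex \<Rightarrow> 'v::ab_group_add \<Rightarrow> 'v) \<Rightarrow> ('v \<Rightarrow> 'w \<Rightarrow> complex)
    \<Rightarrow> 'v set set \<Rightarrow> ('v \<times> 'w) list set" where
  "StV sV p \<FF> = {X. \<forall>F\<in>\<FF>. \<forall>u\<in>F. actV sV p X u \<in> F}"

definition StW :: "(complex \<Rightarrow> 'w::ab_group_add \<Rightarrow> 'w) \<Rightarrow> ('v \<Rightarrow> 'w \<Rightarrow> complex)
    \<Rightarrow> 'w set set \<Rightarrow> ('v \<times> 'w) list set" where
  "StW sW p \<GG> = {X. \<forall>G\<in>\<GG>. \<forall>y\<in>G. actW sW p X y \<in> G}"

definition taut_couple ::
  "(complex \<Rightarrow> 'v::ab_group_add \<Rightarrow> 'v) \<Rightarrow> (complex \<Rightarrow> 'w::ab_group_add \<Rightarrow> 'w)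
   \<Rightarrow> ('v \<Rightarrow> 'w \<Rightarrow> complex) \<Rightarrow> 'v set set \<Rightarrow> 'w set set \<Rightarrow> bool" where
  "taut_couple sV sW p \<FF> \<GG> \<longleftrightarrow>
     semiclosed_V sV p \<FF> \<and> semiclosed_W sW p \<GG> \<and>
     (\<forall>X\<in>StW sW p \<GG>. \<forall>F\<in>\<FF>. \<forall>y\<in>orthW p F. actW sW p X y \<in> orthW p F) \<and>
     (\<forall>X\<in>StV sV p \<FF>. \<forall>G\<in>\<GG>. \<forall>u\<in>orthV p G. actV sV p X u \<in> orthV p G)"

end

theory Submission imports Defs begin

(* The direction (2) => (1) is elementary: an operator stabilizing a flag maps every
   union of flag members into itself, and every operator preserves {0} and the
   whole space.

   The direction (1) => (2) only needs the rank-one operators y |-> <v,y> z.  If (G1, G2) is an immediate pair and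
   v annihilates G1, then y |-> <v,y> z stabilizes G for every z in G2.  Hence an
   annihilator L that is stable under all rank-one operators stabilizing G absorbs
   G2 as soon as it contains a vector y outside the closure of G1; semiclosedness
   turns this into: L contains the whole jump pair of each of its vectors.  From
   this, L is the union of the members it contains and the intersection of the
   members containing it (annihilator_cover). *)

lemma orthW_orthV_least: "G \<subseteq> orthW q F \<Longrightarrow> orthW q (orthV q G) \<subseteq> orthW q F"
  unfolding orthW_def orthV_def by blast

lemma not_in_closure_witness:
  assumes "y \<notin> orthW q (orthV q H)"
  obtains v where "v \<in> orthV q H" and "q v y \<noteq> 0"
  using assms unfolding orthW_def by blast

lemma orthW_transpose: "orthW (\<lambda>w u. p u w) G = orthV p G"
  unfolding orthW_def orthV_def ..

lemma orthV_transpose: "orthV (\<lambda>w u. p u w) F = orthW p F"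
  unfolding orthW_def orthV_def ..

definition preserves :: "'a set set \<Rightarrow> ('a \<Rightarrow> 'a) \<Rightarrow> bool" where
  "preserves \<A> f \<longleftrightarrow> (\<forall>A\<in>\<A>. \<forall>x\<in>A. f x \<in> A)"

text \<open>The rank-one operator \<open>y \<mapsto> q v y \<cdot> z\<close>, i.e.\ the action of the tensor \<open>z \<otimes> v\<close>.\<close>
definition rank_one :: "(complex \<Rightarrow> 'a \<Rightarrow> 'a) \<Rightarrow> ('b \<Rightarrow> 'a \<Rightarrow> complex) \<Rightarrow> 'b \<Rightarrow> 'a \<Rightarrow> 'a \<Rightarrow> 'a"
  where "rank_one s q v z y = s (q v y) z"

lemma preserves_cover:
  assumes "f 0 = 0" and "preserves \<A> f"
    and "L \<noteq> {0} \<and> L \<noteq> UNIV \<longrightarrow> (\<exists>S\<subseteq>\<A>. L = \<Union>S)"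
  shows "preserves {L} f"
  using assms unfolding preserves_def by blast

section \<open>A single semiclosed generalized flag\<close>

locale semiclosed_flag =
  fixes s :: "complex \<Rightarrow> 'a::ab_group_add \<Rightarrow> 'a"
    and q :: "'b \<Rightarrow> 'a \<Rightarrow> complex"
    and \<G> :: "'a set set"
  assumes vs: "vector_space s"
    and q_scale: "\<And>v c y. q v (s c y) = c * q v y"
    and flag: "gen_flag s \<G>"
    and semiclosed: "\<And>G1 G2. imm_pair \<G> G1 G2 \<Longrightarrow> orthW q (orthV q G1) \<in> {G1, G2}"
begin

sublocale vector_space s by (fact vs)

lemma member_subspace: "G \<in> \<G> \<Longrightarrow> subspace G"
  using flag unfolding gen_flag_def by (elim conjE) blast

lemma member_zero: "G \<in> \<G> \<Longrightarrow> 0 \<in> G"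
  using member_subspace subspace_0 by blast

lemma members_chain: "G \<in> \<G> \<Longrightarrow> H \<in> \<G> \<Longrightarrow> G \<subseteq> H \<or> H \<subseteq> G"
  using flag unfolding gen_flag_def by (elim conjE) blast

lemma imm_pair_members: "imm_pair \<G> G1 G2 \<Longrightarrow> G1 \<in> \<G> \<and> G2 \<in> \<G> \<and> G1 \<subset> G2"
  unfolding imm_pair_def by (elim conjE) simp

lemma imm_pair_split:
  assumes "imm_pair \<G> G1 G2" and G: "G \<in> \<G>"
  shows "G \<subseteq> G1 \<or> G2 \<subseteq> G"
proof -
  from assms(1) have G1: "G1 \<in> \<G>" and G2: "G2 \<in> \<G>" and gap: "\<not> (G1 \<subset> G \<and> G \<subset> G2)"
    unfolding imm_pair_def using G by blast+
  show ?thesis using members_chain[OF G G1] members_chain[OF G G2] gap by blast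
qed

lemma jump_pair:
  assumes "y \<noteq> 0"
  obtains G1 G2 where "imm_pair \<G> G1 G2" and "y \<in> G2" and "y \<notin> G1"
  using flag assms unfolding gen_flag_def by blast

lemma closure_below_successor: "imm_pair \<G> G1 G2 \<Longrightarrow> orthW q (orthV q G1) \<subseteq> G2"
  using semiclosed imm_pair_members by blast

lemma orthW_scale: "y \<in> orthW q F \<Longrightarrow> s c y \<in> orthW q F"
  unfolding orthW_def by (simp add: q_scale)

lemma orthW_zero: "0 \<in> orthW q F"
  using q_scale[of _ 0 0] unfolding orthW_def by simp

text \<open>The key supply of stabilizing operators: for an immediate pair \<open>(G1, G2)\<close>, a
  functional killing \<open>G1\<close> and a vector of \<open>G2\<close> give a rank-one operator stabilizing
  the flag (its image lies in every member above \<open>G1\<close>, its kernel contains the others).\<close>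
lemma rank_one_preserves:
  assumes "imm_pair \<G> G1 G2" and "v \<in> orthV q G1" and "z \<in> G2"
  shows "preserves \<G> (rank_one s q v z)"
  unfolding preserves_def rank_one_def
proof (intro ballI)
  fix G y assume G: "G \<in> \<G>" and y: "y \<in> G"
  from imm_pair_split[OF assms(1) G] show "s (q v y) z \<in> G"
  proof
    assume "G \<subseteq> G1"
    then have "q v y = 0" using assms(2) y unfolding orthV_def by blast
    then show ?thesis using member_zero[OF G] by simp
  next
    assume "G2 \<subseteq> G"
    then show ?thesis using assms(3) subspace_scale[OF member_subspace[OF G]] by blast
  qed
qed

text \<open>From now on \<open>L = orthW q F\<close> is an annihilator that is stable under every
  rank-one operator stabilizing the flag.\<close>
context
  fixes F :: "'b set"
  assumes stable: "\<And>v z. preserves \<G> (rank_one s q v z) \<Longrightarrow> preserves {orthW q F} (rank_one s q v z)"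
begin

lemma absorbs_successor:
  assumes H: "imm_pair \<G> H1 H2" and yL: "y \<in> orthW q F"
    and y: "y \<notin> orthW q (orthV q H1)"
  shows "H2 \<subseteq> orthW q F"
proof
  fix z assume z: "z \<in> H2"
  obtain v where v: "v \<in> orthV q H1" and qv: "q v y \<noteq> 0"
    using not_in_closure_witness[OF y] .
  have "preserves {orthW q F} (rank_one s q v z)"
    using stable rank_one_preserves[OF H v z] by blast
  then have "s (q v y) z \<in> orthW q F"
    using yL unfolding preserves_def rank_one_def by blast
  then have "s (1 / q v y) (s (q v y) z) \<in> orthW q F" by (rule orthW_scale)
  then show "z \<in> orthW q F" using qv by simp
qed

lemma contains_jump:
  assumes G: "imm_pair \<G> G1 G2" and yL: "y \<in> orthW q F"
    and y2: "y \<in> G2" and y1: "y \<notin> G1"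
  shows "G2 \<subseteq> orthW q F"
proof -
  have G1L: "G1 \<subseteq> orthW q F"
  proof
    fix z assume z: "z \<in> G1"
    show "z \<in> orthW q F"
    proof (cases "z = 0")
      case True then show ?thesis using orthW_zero by simp
    next
      case False
      then obtain H1 H2 where H: "imm_pair \<G> H1 H2" and "z \<in> H2" "z \<notin> H1"
        by (rule jump_pair)
      then have "H2 \<subseteq> G1"
        using imm_pair_split[OF H] imm_pair_members[OF G] z by blast
      then have "y \<notin> orthW q (orthV q H1)"
        using closure_below_successor[OF H] y1 by blast
      then show ?thesis using absorbs_successor[OF H yL] \<open>z \<in> H2\<close> by blast
    qed
  qed
  from semiclosed[OF G] show ?thesis
  proof
    assume "orthW q (orthV q G1) = G1"
    then show ?thesis using absorbs_successor[OF G yL] y1 by simp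
  next
    assume "orthW q (orthV q G1) \<in> {G2}"
    then show ?thesis using orthW_orthV_least[OF G1L] by simp
  qed
qed

lemma annihilator_Union:
  assumes "orthW q F \<noteq> {0}"
  shows "orthW q F = \<Union>{G \<in> \<G>. G \<subseteq> orthW q F}"
proof -
  have "y \<in> \<Union>{G \<in> \<G>. G \<subseteq> orthW q F}" if yL: "y \<in> orthW q F" and y: "y \<noteq> 0" for y
  proof -
    obtain G1 G2 where G: "imm_pair \<G> G1 G2" "y \<in> G2" "y \<notin> G1"
      using jump_pair[OF y] .
    then show ?thesis using contains_jump[OF G(1) yL] imm_pair_members by blast
  qed
  moreover obtain y0 where "y0 \<in> orthW q F" "y0 \<noteq> 0"
    using assms orthW_zero by blast
  ultimately show ?thesis using member_zero by blast
qed

text \<open>A vector outside \<open>L\<close> is excluded by the lower member of its jump pair, which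
  contains \<open>L\<close>: a vector of \<open>L\<close> outside it would drag the upper member into \<open>L\<close>.\<close>
lemma annihilator_Inter: "orthW q F = \<Inter>{G \<in> \<G>. orthW q F \<subseteq> G}"
proof -
  have "y \<in> orthW q F" if yI: "y \<in> \<Inter>{G \<in> \<G>. orthW q F \<subseteq> G}" for y
  proof (rule ccontr)
    assume yL: "y \<notin> orthW q F"
    then have "y \<noteq> 0" using orthW_zero by blast
    then obtain G1 G2 where G: "imm_pair \<G> G1 G2" and y2: "y \<in> G2" and y1: "y \<notin> G1"
      by (rule jump_pair)
    have "orthW q F \<subseteq> G1"
    proof
      fix x assume xL: "x \<in> orthW q F"
      show "x \<in> G1"
      proof (rule ccontr)
        assume x1: "x \<notin> G1"
        then have "x \<noteq> 0" using member_zero imm_pair_members[OF G] by blast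
        then obtain H1 H2 where H: "imm_pair \<G> H1 H2" and "x \<in> H2" "x \<notin> H1"
          by (rule jump_pair)
        then have "G2 \<subseteq> H2"
          using imm_pair_split[OF G] imm_pair_members[OF H] x1 by blast
        then show False using contains_jump[OF H xL \<open>x \<in> H2\<close> \<open>x \<notin> H1\<close>] y2 yL by blast
      qed
    qed
    then show False using yI y1 imm_pair_members[OF G] by blast
  qed
  then show ?thesis by blast
qed

theorem annihilator_cover:
  assumes "orthW q F \<noteq> {0}"
  shows "(\<exists>S\<subseteq>\<G>. orthW q F = \<Union>S) \<and> (\<exists>T\<subseteq>\<G>. orthW q F = \<Inter>T)"
proof
  show "\<exists>S\<subseteq>\<G>. orthW q F = \<Union>S"
    by (rule exI[of _ "{G \<in> \<G>. G \<subseteq> orthW q F}"]) (use annihilator_Union[OF assms] in auto)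
  show "\<exists>T\<subseteq>\<G>. orthW q F = \<Inter>T"
    by (rule exI[of _ "{G \<in> \<G>. orthW q F \<subseteq> G}"]) (use annihilator_Inter in auto)
qed

end

end

section \<open>The dual pair \<open>(V, V\<^sub>*)\<close>\<close>

text \<open>The only consequences of nondegeneracy used below: both sides are vector spaces
  and the pairing is homogeneous in each argument.\<close>
lemma nondeg_pairing_facts:
  assumes "nondeg_pairing sV sW p"
  shows "vector_space sV" "vector_space sW"
    and "\<And>v c y. p v (sW c y) = c * p v y"
    and "\<And>w c u. p (sV c u) w = c * p u w"
proof -
  show "vector_space sV" "vector_space sW"
    using assms unfolding nondeg_pairing_def by simp_all
  fix v c y
  have "Vector_Spaces.linear sW (*) (p v)"
    using assms unfolding nondeg_pairing_def by simp
  then show "p v (sW c y) = c * p v y"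
    unfolding Vector_Spaces.linear_iff by blast
next
  fix w c u
  have "Vector_Spaces.linear sV (*) (\<lambda>u. p u w)"
    using assms unfolding nondeg_pairing_def by simp
  then show "p (sV c u) w = c * p u w"
    unfolding Vector_Spaces.linear_iff by blast
qed

lemma semiclosed_flag_W:
  assumes "nondeg_pairing sV sW p" and "semiclosed_W sW p \<G>"
  shows "semiclosed_flag sW p \<G>"
proof (rule semiclosed_flag.intro)
  show "vector_space sW" by (rule nondeg_pairing_facts(2)[OF assms(1)])
  show "p v (sW c y) = c * p v y" for v c y by (rule nondeg_pairing_facts(3)[OF assms(1)])
  show "gen_flag sW \<G>"
    using assms(2) unfolding semiclosed_W_def by (rule conjunct1)
  have "\<forall>G1 G2. imm_pair \<G> G1 G2 \<longrightarrow> orthW p (orthV p G1) \<in> {G1, G2}"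
    using assms(2) unfolding semiclosed_W_def by (rule conjunct2)
  then show "orthW p (orthV p G1) \<in> {G1, G2}" if "imm_pair \<G> G1 G2" for G1 G2
    using that by blast
qed

lemma semiclosed_flag_V:
  assumes "nondeg_pairing sV sW p" and "semiclosed_V sV p \<F>"
  shows "semiclosed_flag sV (\<lambda>w u. p u w) \<F>"
proof (rule semiclosed_flag.intro)
  show "vector_space sV" by (rule nondeg_pairing_facts(1)[OF assms(1)])
  show "p (sV c u) w = c * p u w" for w c u by (rule nondeg_pairing_facts(4)[OF assms(1)])
  show "gen_flag sV \<F>"
    using assms(2) unfolding semiclosed_V_def by (rule conjunct1)
  have "\<forall>F1 F2. imm_pair \<F> F1 F2 \<longrightarrow> orthV p (orthW p F1) \<in> {F1, F2}"
    using assms(2) unfolding semiclosed_V_def by (rule conjunct2)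
  then show "orthW (\<lambda>w u. p u w) (orthV (\<lambda>w u. p u w) F1) \<in> {F1, F2}" if "imm_pair \<F> F1 F2" for F1 F2
    using that unfolding orthW_transpose[of p] orthV_transpose[of p] by blast
qed

lemma StW_iff: "X \<in> StW sW p \<G> \<longleftrightarrow> preserves \<G> (actW sW p X)"
  unfolding StW_def preserves_def by simp

lemma StV_iff: "X \<in> StV sV p \<F> \<longleftrightarrow> preserves \<F> (actV sV p X)"
  unfolding StV_def preserves_def by simp

lemma actW_rank_one:
  assumes "vector_space sW"
  shows "actW sW p [(v, - z)] = rank_one sW p v z"
proof -
  interpret vector_space sW by fact
  show ?thesis unfolding actW_def rank_one_def by (simp add: scale_minus_right)
qed

lemma actV_rank_one: "actV sV p [(z, w)] = rank_one sV (\<lambda>w u. p u w) w z"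
  unfolding actV_def rank_one_def by simp

lemma actW_zero:
  assumes "nondeg_pairing sV sW p" shows "actW sW p X 0 = 0"
proof -
  interpret vector_space sW using nondeg_pairing_facts(2)[OF assms] .
  have p0: "p v 0 = 0" for v using nondeg_pairing_facts(3)[OF assms, of v 0 0] by simp
  show ?thesis unfolding actW_def by (induct X) (simp_all add: p0 split_def)
qed

lemma actV_zero:
  assumes "nondeg_pairing sV sW p" shows "actV sV p X 0 = 0"
proof -
  interpret vector_space sV using nondeg_pairing_facts(1)[OF assms] .
  have p0: "p 0 w = 0" for w using nondeg_pairing_facts(4)[OF assms, of 0 0 w] by simp
  show ?thesis unfolding actV_def by (induct X) (simp_all add: p0 split_def)
qed

lemma preserves_image_iff: "preserves (g ` \<A>) f \<longleftrightarrow> (\<forall>A\<in>\<A>. preserves {g A} f)"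
  unfolding preserves_def by blast

lemma taut_couple_iff:
  assumes "semiclosed_V sV p \<F>" and "semiclosed_W sW p \<G>"
  shows "taut_couple sV sW p \<F> \<G> \<longleftrightarrow>
    (\<forall>X\<in>StW sW p \<G>. preserves (orthW p ` \<F>) (actW sW p X)) \<and>
    (\<forall>X\<in>StV sV p \<F>. preserves (orthV p ` \<G>) (actV sV p X))"
  using assms unfolding taut_couple_def preserves_def by simp

lemma cover_W:
  assumes "nondeg_pairing sV sW p" and "semiclosed_W sW p \<G>"
    and taut: "\<And>X. X \<in> StW sW p \<G> \<Longrightarrow> preserves (orthW p ` \<F>) (actW sW p X)"
    and F: "F \<in> \<F>" and "orthW p F \<noteq> {0}"
  shows "(\<exists>S\<subseteq>\<G>. orthW p F = \<Union>S) \<and> (\<exists>T\<subseteq>\<G>. orthW p F = \<Inter>T)"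
proof -
  interpret semiclosed_flag sW p \<G> by (rule semiclosed_flag_W[OF assms(1,2)])
  have stable: "preserves {orthW p F} (rank_one sW p v z)" if "preserves \<G> (rank_one sW p v z)" for v z
  proof -
    have "preserves (orthW p ` \<F>) (rank_one sW p v z)"
      using taut[of "[(v, - z)]"] that by (simp add: StW_iff actW_rank_one[OF vs])
    then show ?thesis using F by (simp add: preserves_image_iff)
  qed
  show ?thesis using annihilator_cover[OF stable assms(5)] .
qed

lemma cover_V:
  assumes "nondeg_pairing sV sW p" and "semiclosed_V sV p \<F>"
    and taut: "\<And>X. X \<in> StV sV p \<F> \<Longrightarrow> preserves (orthV p ` \<G>) (actV sV p X)"
    and G: "G \<in> \<G>" and "orthV p G \<noteq> {0}"
  shows "(\<exists>S\<subseteq>\<F>. orthV p G = \<Union>S) \<and> (\<exists>T\<subseteq>\<F>. orthV p G = \<Inter>T)"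
proof -
  interpret semiclosed_flag sV "\<lambda>w u. p u w" \<F> by (rule semiclosed_flag_V[OF assms(1,2)])
  have "(\<exists>S\<subseteq>\<F>. orthW (\<lambda>w u. p u w) G = \<Union>S) \<and> (\<exists>T\<subseteq>\<F>. orthW (\<lambda>w u. p u w) G = \<Inter>T)"
  proof (rule annihilator_cover)
    fix w z assume "preserves \<F> (rank_one sV (\<lambda>w u. p u w) w z)"
    then have "preserves (orthV p ` \<G>) (rank_one sV (\<lambda>w u. p u w) w z)"
      using taut[of "[(z, w)]"] by (simp add: StV_iff actV_rank_one)
    then show "preserves {orthW (\<lambda>w u. p u w) G} (rank_one sV (\<lambda>w u. p u w) w z)"
      using G by (simp add: preserves_image_iff orthW_transpose[of p])
  qed (simp add: orthW_transpose[of p] assms(5))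
  then show ?thesis unfolding orthW_transpose[of p] .
qed

theorem proposition3p3:
  fixes sV :: "complex \<Rightarrow> 'v::ab_group_add \<Rightarrow> 'v"
    and sW :: "complex \<Rightarrow> 'w::ab_group_add \<Rightarrow> 'w"
    and p :: "'v \<Rightarrow> 'w \<Rightarrow> complex"
    and \<FF> :: "'v set set" and \<GG> :: "'w set set"
  assumes "nondeg_pairing sV sW p"
    and "countable_dim sV" and "countable_dim sW"
    and "semiclosed_V sV p \<FF>" and "semiclosed_W sW p \<GG>"
  shows "taut_couple sV sW p \<FF> \<GG> \<longleftrightarrow>
    ((\<forall>F\<in>\<FF>. orthW p F \<noteq> {0} \<and> orthW p F \<noteq> UNIV \<longrightarrow>
        (\<exists>S\<subseteq>\<GG>. orthW p F = \<Union>S) \<and> (\<exists>T\<subseteq>\<GG>. orthW p F = \<Inter>T)) \<and>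
     (\<forall>G\<in>\<GG>. orthV p G \<noteq> {0} \<and> orthV p G \<noteq> UNIV \<longrightarrow>
        (\<exists>S\<subseteq>\<FF>. orthV p G = \<Union>S) \<and> (\<exists>T\<subseteq>\<FF>. orthV p G = \<Inter>T)))"
  (is "_ \<longleftrightarrow> ?covers")
proof
  assume "taut_couple sV sW p \<FF> \<GG>"
  then have "\<And>X. X \<in> StW sW p \<GG> \<Longrightarrow> preserves (orthW p ` \<FF>) (actW sW p X)"
    and "\<And>X. X \<in> StV sV p \<FF> \<Longrightarrow> preserves (orthV p ` \<GG>) (actV sV p X)"
    unfolding taut_couple_iff[OF assms(4,5)] by blast+
  from cover_W[OF assms(1,5) this(1)] cover_V[OF assms(1,4) this(2)]
  show ?covers by simp
next
  assume covers: ?covers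
  have "preserves {orthW p F} (actW sW p X)" if "X \<in> StW sW p \<GG>" and "F \<in> \<FF>" for X F
    by (rule preserves_cover[OF actW_zero[OF assms(1)] that(1)[unfolded StW_iff]])
      (use conjunct1[OF covers] that(2) in blast)
  moreover have "preserves {orthV p G} (actV sV p X)" if "X \<in> StV sV p \<FF>" and "G \<in> \<GG>" for X G
    by (rule preserves_cover[OF actV_zero[OF assms(1)] that(1)[unfolded StV_iff]])
      (use conjunct2[OF covers] that(2) in blast)
  ultimately show "taut_couple sV sW p \<FF> \<GG>"
    unfolding taut_couple_iff[OF assms(4,5)] preserves_image_iff by blast
qed

end
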